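(* Let $R$ be a commutative ring with $1$ and $I$ an ideal of $R$ which is not contained in any minimal prime ideal of $R$. If $I$ is a projective $R$-module, then $I$ is a finitely generated ideal. *)

theory Defs
  imports "HOL-Algebra.Ideal" "HOL-Library.FuncSet"
begin

definition minimal_prime :: "('a, 'c) ring_scheme \<Rightarrow> 'a set \<Rightarrow> bool" where
  "minimal_prime R P \<longleftrightarrow> primeideal P R \<and> (\<forall>Q. primeideal Q R \<and> Q \<subseteq> P \<longrightarrow> Q = P)"

definition fg_ideal :: "('a, 'c) ring_scheme \<Rightarrow> 'a set \<Rightarrow> bool" where
  "fg_ideal R I \<longleftrightarrow> (\<exists>S. finite S \<and> S \<subseteq> carrier R \<and> I = Idl\<^bsub>R\<^esub> S)"

definition free_carrier :: "('a, 'c) ring_scheme \<Rightarrow> 'b set \<Rightarrow> ('b \<Rightarrow> 'a) set" where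
  "free_carrier R J = {f. f \<in> J \<rightarrow>\<^sub>E carrier R \<and> finite {j \<in> J. f j \<noteq> \<zero>\<^bsub>R\<^esub>}}"

definition free_add :: "('a, 'c) ring_scheme \<Rightarrow> 'b set \<Rightarrow> ('b \<Rightarrow> 'a) \<Rightarrow> ('b \<Rightarrow> 'a) \<Rightarrow> ('b \<Rightarrow> 'a)" where
  "free_add R J f g = (\<lambda>j\<in>J. f j \<oplus>\<^bsub>R\<^esub> g j)"

definition free_smult :: "('a, 'c) ring_scheme \<Rightarrow> 'b set \<Rightarrow> 'a \<Rightarrow> ('b \<Rightarrow> 'a) \<Rightarrow> ('b \<Rightarrow> 'a)" where
  "free_smult R J r f = (\<lambda>j\<in>J. r \<otimes>\<^bsub>R\<^esub> f j)"

definition summand_of_free :: "('a, 'c) ring_scheme \<Rightarrow> 'a set \<Rightarrow> 'b set \<Rightarrow> bool" where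
  "summand_of_free R I J \<longleftrightarrow>
     (\<exists>s p. s \<in> I \<rightarrow> free_carrier R J \<and> p \<in> free_carrier R J \<rightarrow> I
        \<and> (\<forall>a\<in>I. \<forall>b\<in>I. s (a \<oplus>\<^bsub>R\<^esub> b) = free_add R J (s a) (s b))
        \<and> (\<forall>r\<in>carrier R. \<forall>a\<in>I. s (r \<otimes>\<^bsub>R\<^esub> a) = free_smult R J r (s a))
        \<and> (\<forall>f\<in>free_carrier R J. \<forall>g\<in>free_carrier R J. p (free_add R J f g) = p f \<oplus>\<^bsub>R\<^esub> p g)
        \<and> (\<forall>r\<in>carrier R. \<forall>f\<in>free_carrier R J. p (free_smult R J r f) = r \<otimes>\<^bsub>R\<^esub> p f)
        \<and> (\<forall>a\<in>I. p (s a) = a))"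

text \<open>Projective R-module = direct summand of a free R-module R^(J) for some index set J,
  whose elements may live in an arbitrary type 'b.\<close>
definition projective_ideal :: "'b itself \<Rightarrow> ('a, 'c) ring_scheme \<Rightarrow> 'a set \<Rightarrow> bool" where
  "projective_ideal (_::'b itself) R I \<longleftrightarrow> (\<exists>J::'b set. summand_of_free R I J)"

end

(*
  A projective ideal has a dual basis: generators gen j = p(e_j) of I and coordinate functionals
  a |-> s(a)_j with a = (SUM j. s(a)_j gen j). Commutativity gives s(a)_j b = s(b)_j a, so the
  trace t_K = (SUM j:K. s(gen j)_j) maps every b in I into the ideal generated by gen`K, and fixes
  a as soon as K contains the support of s(a). Thus the ideal U of all u for which uI lies in a
  finitely generated subideal of I contains, for each a in I, some t with ta = a. If I is not
  finitely generated, U is proper, hence lies in a maximal ideal M; a minimal prime P below M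
  then contains I, because (1 - t)a = 0 while 1 - t is not in M.
*)

theory Submission
  imports Defs "HOL-Algebra.Ring_Divisibility"
begin

lemma (in ring) ex_maximalideal_superset:
  assumes U: "ideal U R" and one: "\<one> \<notin> U"
  shows "\<exists>M. maximalideal M R \<and> U \<subseteq> M"
proof -
  let ?A = "{J. ideal J R \<and> U \<subseteq> J \<and> \<one> \<notin> J}"
  have "\<exists>M\<in>?A. \<forall>X\<in>?A. M \<subseteq> X \<longrightarrow> X = M"
  proof (rule subset_Zorn_nonempty)
    show "?A \<noteq> {}" using U one by blast
    fix C assume C: "C \<noteq> {}" "subset.chain ?A C"
    have CA: "C \<subseteq> ?A" using C(2) unfolding subset_chain_def by blast
    then have "subset.chain {J. ideal J R} C" using C(2) unfolding subset_chain_def by blast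
    then have "ideal (if C = {} then {\<zero>} else \<Union>C) R" by (rule chain_Union_is_ideal)
    then have "ideal (\<Union>C) R" using C(1) by simp
    moreover have "U \<subseteq> \<Union>C" using C(1) CA by blast
    moreover have "\<one> \<notin> \<Union>C" using CA by blast
    ultimately show "\<Union>C \<in> ?A" by blast
  qed
  then obtain M where "M \<in> ?A" and max: "\<forall>X\<in>?A. M \<subseteq> X \<longrightarrow> X = M" ..
  then have M: "ideal M R" "U \<subseteq> M" "\<one> \<notin> M" by auto
  have "maximalideal M R"
  proof (rule maximalidealI[OF M(1)])
    show "carrier R \<noteq> M" using M(3) one_closed by blast
    fix X assume X: "ideal X R" "M \<subseteq> X" "X \<subseteq> carrier R"
    show "X = M \<or> X = carrier R"
    proof (cases "\<one> \<in> X")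
      case True
      then show ?thesis using ideal.one_imp_carrier[OF X(1)] by blast
    next
      case False
      then show ?thesis using max X M(2) by blast
    qed
  qed
  with M(2) show ?thesis by blast
qed

lemma (in cring) primeideal_Inter_chain:
  assumes ne: "C \<noteq> {}" and prime: "\<And>P. P \<in> C \<Longrightarrow> primeideal P R"
    and chain: "\<And>P Q. P \<in> C \<Longrightarrow> Q \<in> C \<Longrightarrow> P \<subseteq> Q \<or> Q \<subseteq> P"
  shows "primeideal (\<Inter>C) R"
proof (rule primeidealI[OF i_Intersect is_cring])
  show "ideal P R" if "P \<in> C" for P using prime[OF that] primeideal.axioms(1) by blast
  show "C \<noteq> {}" by (fact ne)
  obtain P where P: "P \<in> C" using ne by blast
  then have "\<one> \<notin> P"
    using ideal.one_imp_carrier[OF primeideal.axioms(1)] primeideal.I_notcarr prime by blast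
  then show "carrier R \<noteq> \<Inter>C" using P by blast
next
  fix a b assume ab: "a \<in> carrier R" "b \<in> carrier R" "a \<otimes> b \<in> \<Inter>C"
  show "a \<in> \<Inter>C \<or> b \<in> \<Inter>C"
  proof (rule ccontr)
    assume "\<not> ?thesis"
    then obtain P Q where PQ: "P \<in> C" "Q \<in> C" "a \<notin> P" "b \<notin> Q" by blast
    \<comment> \<open>the smaller of the two primes contains neither \<open>a\<close> nor \<open>b\<close>\<close>
    then obtain T where T: "T \<in> C" "a \<notin> T" "b \<notin> T" using chain[OF PQ(1,2)] by blast
    then show False using ab primeideal.I_prime[OF prime[OF T(1)]] by blast
  qed
qed

lemma (in cring) ex_minimal_prime_subset:
  assumes Q: "primeideal Q R"
  shows "\<exists>P. minimal_prime R P \<and> P \<subseteq> Q"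
proof -
  let ?A = "{P. primeideal P R \<and> P \<subseteq> Q}"
  have "\<exists>M\<in>?A. \<forall>P\<in>?A. P \<subseteq> M \<longrightarrow> P = M"
  proof (rule predicate_Zorn)
    show "partial_order_on ?A (relation_of (\<lambda>X Y. Y \<subseteq> X) ?A)"
      by (rule partial_order_on_relation_ofI) auto
    fix C assume C: "C \<in> Chains (relation_of (\<lambda>X Y. Y \<subseteq> X) ?A)"
    then have CA: "C \<subseteq> ?A" by (rule Chains_relation_of)
    have chain: "P \<subseteq> P' \<or> P' \<subseteq> P" if "P \<in> C" "P' \<in> C" for P P'
      using C that unfolding Chains_def relation_of_def by blast
    show "\<exists>L\<in>?A. \<forall>P\<in>C. L \<subseteq> P"
    proof (cases "C = {}")
      case True
      then show ?thesis using Q by blast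
    next
      case False
      have "primeideal (\<Inter>C) R" using primeideal_Inter_chain[OF False] CA chain by blast
      moreover have "\<Inter>C \<subseteq> Q" using False CA by blast
      ultimately show ?thesis by blast
    qed
  qed
  then obtain P where "P \<in> ?A" and min: "\<forall>P'\<in>?A. P' \<subseteq> P \<longrightarrow> P' = P" ..
  then have P: "primeideal P R" "P \<subseteq> Q" by auto
  have "minimal_prime R P"
    unfolding minimal_prime_def using P min by blast
  with P(2) show ?thesis by blast
qed

definition fg_colon :: "('a, 'c) ring_scheme \<Rightarrow> 'a set \<Rightarrow> 'a set" where
  "fg_colon R I =
     {u \<in> carrier R. \<exists>F. finite F \<and> F \<subseteq> I \<and> (\<forall>b\<in>I. u \<otimes>\<^bsub>R\<^esub> b \<in> Idl\<^bsub>R\<^esub> F)}"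

lemma (in cring) fg_colon_ideal:
  assumes I: "ideal I R"
  shows "ideal (fg_colon R I) R"
proof -
  have IC: "I \<subseteq> carrier R" using ideal.Icarr[OF I] by blast
  have Idl: "ideal (Idl F) R" if "F \<subseteq> I" for F using genideal_ideal that IC by blast
  show ?thesis
  proof (rule idealI[OF ring_axioms])
    show "subgroup (fg_colon R I) (add_monoid R)"
    proof (rule add.subgroupI)
      show "fg_colon R I \<subseteq> carrier R" by (auto simp: fg_colon_def)
      have "\<zero> \<otimes> b \<in> Idl {}" if "b \<in> I" for b
        using that IC additive_subgroup.zero_closed[OF ideal.axioms(1)[OF Idl]] by auto
      then show "fg_colon R I \<noteq> {}" unfolding fg_colon_def by blast
    next
      fix u assume "u \<in> fg_colon R I"
      then obtain F where u: "u \<in> carrier R" "finite F" "F \<subseteq> I" "\<forall>b\<in>I. u \<otimes> b \<in> Idl F"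
        unfolding fg_colon_def by blast
      have "\<ominus> u \<otimes> b \<in> Idl F" if "b \<in> I" for b
        using u that IC additive_subgroup.a_inv_closed[OF ideal.axioms(1)[OF Idl[OF u(3)]]]
        by (simp add: l_minus subset_iff)
      then show "\<ominus> u \<in> fg_colon R I" unfolding fg_colon_def using u by blast
    next
      fix u v assume "u \<in> fg_colon R I" "v \<in> fg_colon R I"
      then obtain F G where u: "u \<in> carrier R" "finite F" "F \<subseteq> I" "\<forall>b\<in>I. u \<otimes> b \<in> Idl F"
        and v: "v \<in> carrier R" "finite G" "G \<subseteq> I" "\<forall>b\<in>I. v \<otimes> b \<in> Idl G"
        unfolding fg_colon_def by blast
      have FG: "F \<union> G \<subseteq> I" using u v by blast
      have "(u \<oplus> v) \<otimes> b \<in> Idl (F \<union> G)" if "b \<in> I" for b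
      proof -
        have "Idl F \<subseteq> Idl (F \<union> G)" "Idl G \<subseteq> Idl (F \<union> G)"
          using subset_Idl_subset[of "F \<union> G"] FG IC by auto
        then have "u \<otimes> b \<oplus> v \<otimes> b \<in> Idl (F \<union> G)"
          using u(4) v(4) that additive_subgroup.a_closed[OF ideal.axioms(1)[OF Idl[OF FG]]] by blast
        then show ?thesis using u(1) v(1) that IC by (simp add: l_distr subset_iff)
      qed
      then show "u \<oplus> v \<in> fg_colon R I"
        unfolding fg_colon_def using u v by auto
    qed
  next
    fix u x assume "u \<in> fg_colon R I" "x \<in> carrier R"
    then obtain F where u: "u \<in> carrier R" "finite F" "F \<subseteq> I" "\<forall>b\<in>I. u \<otimes> b \<in> Idl F"
      and x: "x \<in> carrier R" unfolding fg_colon_def by blast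
    have "x \<otimes> u \<otimes> b \<in> Idl F" "u \<otimes> x \<otimes> b \<in> Idl F" if b: "b \<in> I" for b
    proof -
      have bC: "b \<in> carrier R" using b IC by blast
      have "x \<otimes> (u \<otimes> b) \<in> Idl F" using ideal.I_l_closed[OF Idl[OF u(3)] u(4)[rule_format, OF b] x] .
      moreover have "x \<otimes> u \<otimes> b = x \<otimes> (u \<otimes> b)" "u \<otimes> x \<otimes> b = x \<otimes> (u \<otimes> b)"
        using u(1) x bC by algebra+
      ultimately show "x \<otimes> u \<otimes> b \<in> Idl F" "u \<otimes> x \<otimes> b \<in> Idl F" by simp_all
    qed
    then show "x \<otimes> u \<in> fg_colon R I" "u \<otimes> x \<in> fg_colon R I"
      unfolding fg_colon_def using u x by auto
  qed
qed

lemma (in ring) fg_ideal_if_one_in_fg_colon: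
  assumes I: "ideal I R" and one: "\<one> \<in> fg_colon R I"
  shows "fg_ideal R I"
proof -
  obtain F where F: "finite F" "F \<subseteq> I" and "\<forall>b\<in>I. \<one> \<otimes> b \<in> Idl F"
    using one unfolding fg_colon_def by blast
  then have "I \<subseteq> Idl F" using ideal.Icarr[OF I] by auto
  moreover have "Idl F \<subseteq> I" using genideal_minimal[OF I F(2)] .
  ultimately show ?thesis
    unfolding fg_ideal_def using F ideal.Icarr[OF I] by blast
qed

lemma (in cring) minimal_prime_if_fixed_by_proper_ideal:
  assumes U: "ideal U R" "\<one> \<notin> U" and I: "I \<subseteq> carrier R"
    and fixed: "\<And>a. a \<in> I \<Longrightarrow> \<exists>t\<in>U. t \<otimes> a = a"
  shows "\<exists>P. minimal_prime R P \<and> I \<subseteq> P"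
proof -
  obtain M where M: "maximalideal M R" "U \<subseteq> M" using ex_maximalideal_superset[OF U] by blast
  interpret M: maximalideal M R by (fact M(1))
  obtain P where P: "minimal_prime R P" "P \<subseteq> M"
    using ex_minimal_prime_subset[OF maximalideal_prime[OF M(1)]] by blast
  then interpret P: primeideal P R unfolding minimal_prime_def by blast
  have "a \<in> P" if a: "a \<in> I" for a
  proof -
    obtain t where t: "t \<in> U" "t \<otimes> a = a" using fixed[OF a] by blast
    have tC: "t \<in> carrier R" using t(1) ideal.Icarr[OF U(1)] by blast
    have aC: "a \<in> carrier R" using a I by blast
    have "(\<one> \<ominus> t) \<otimes> a = a \<ominus> t \<otimes> a" using tC aC by algebra
    also have "\<dots> = \<zero>" using t(2) aC by (simp add: a_minus_def r_neg)
    finally have "(\<one> \<ominus> t) \<otimes> a \<in> P" by (simp add: P.zero_closed)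
    moreover have "\<one> \<ominus> t \<notin> P"
    proof
      \<comment> \<open>otherwise \<open>\<one> = (\<one> \<ominus> t) \<oplus> t\<close> would lie in the proper ideal \<open>M\<close>\<close>
      assume "\<one> \<ominus> t \<in> P"
      then have "(\<one> \<ominus> t) \<oplus> t \<in> M" using P(2) M(2) t(1) by (intro M.a_closed) auto
      moreover have "(\<one> \<ominus> t) \<oplus> t = \<one>" using tC by algebra
      ultimately show False using M.I_notcarr M.one_imp_carrier by simp
    qed
    moreover have "\<one> \<ominus> t \<in> carrier R" using tC by simp
    ultimately show ?thesis using P.I_prime[OF _ aC] by blast
  qed
  with P(1) show ?thesis by blast
qed

lemma free_carrier_apply:
  "f \<in> free_carrier R J \<Longrightarrow> j \<in> J \<Longrightarrow> f j \<in> carrier R"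
  unfolding free_carrier_def by auto

definition free_basis :: "('a, 'c) ring_scheme \<Rightarrow> 'b set \<Rightarrow> 'b \<Rightarrow> ('b \<Rightarrow> 'a)" where
  "free_basis R J j = (\<lambda>k\<in>J. if k = j then \<one>\<^bsub>R\<^esub> else \<zero>\<^bsub>R\<^esub>)"

lemma (in ring) free_basis_in_free_carrier: "free_basis R J j \<in> free_carrier R J"
proof -
  have "{k \<in> J. free_basis R J j k \<noteq> \<zero>} \<subseteq> {j}" unfolding free_basis_def by auto
  then have "finite {k \<in> J. free_basis R J j k \<noteq> \<zero>}" by (rule finite_subset) simp
  moreover have "free_basis R J j \<in> J \<rightarrow>\<^sub>E carrier R" unfolding free_basis_def by auto
  ultimately show ?thesis unfolding free_carrier_def by blast
qed

lemma (in ring) free_smult_closed: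
  assumes r: "r \<in> carrier R" and f: "f \<in> free_carrier R J"
  shows "free_smult R J r f \<in> free_carrier R J"
proof -
  have "{k \<in> J. free_smult R J r f k \<noteq> \<zero>} \<subseteq> {k \<in> J. f k \<noteq> \<zero>}"
    using r unfolding free_smult_def by auto
  moreover have "finite {k \<in> J. f k \<noteq> \<zero>}" using f unfolding free_carrier_def by blast
  ultimately have "finite {k \<in> J. free_smult R J r f k \<noteq> \<zero>}" by (rule finite_subset)
  moreover have "free_smult R J r f \<in> J \<rightarrow>\<^sub>E carrier R"
    using r free_carrier_apply[OF f] unfolding free_smult_def by auto
  ultimately show ?thesis unfolding free_carrier_def by blast
qed

lemma (in ring) finsum_in_ideal:
  assumes A: "ideal A R" and K: "finite K" and h: "\<And>j. j \<in> K \<Longrightarrow> h j \<in> A"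
  shows "(\<Oplus>j\<in>K. h j) \<in> A"
  using K h
proof (induction K rule: finite_induct)
  case empty
  then show ?case using additive_subgroup.zero_closed[OF ideal.axioms(1)[OF A]] by simp
next
  case (insert j K)
  then have "h \<in> insert j K \<rightarrow> carrier R" using ideal.Icarr[OF A] by blast
  then show ?case
    using insert additive_subgroup.a_closed[OF ideal.axioms(1)[OF A]] by (simp add: finsum_insert)
qed

locale ideal_free_summand = cring R for R :: "('a, 'c) ring_scheme" (structure) +
  fixes I :: "'a set" and J :: "'b set"
    and s :: "'a \<Rightarrow> 'b \<Rightarrow> 'a" and p :: "('b \<Rightarrow> 'a) \<Rightarrow> 'a"
  assumes ideal: "ideal I R"
    and s_into: "s \<in> I \<rightarrow> free_carrier R J"
    and p_into: "p \<in> free_carrier R J \<rightarrow> I"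
    and s_smult: "\<And>r a. r \<in> carrier R \<Longrightarrow> a \<in> I \<Longrightarrow> s (r \<otimes> a) = free_smult R J r (s a)"
    and p_add: "\<And>f g. f \<in> free_carrier R J \<Longrightarrow> g \<in> free_carrier R J \<Longrightarrow>
      p (free_add R J f g) = p f \<oplus> p g"
    and p_smult: "\<And>r f. r \<in> carrier R \<Longrightarrow> f \<in> free_carrier R J \<Longrightarrow>
      p (free_smult R J r f) = r \<otimes> p f"
    and p_s: "\<And>a. a \<in> I \<Longrightarrow> p (s a) = a"

lemma ideal_free_summandI:
  assumes "cring R" "ideal I R" "summand_of_free R I J"
  obtains s p where "ideal_free_summand R I J s p"
  using assms(3) unfolding summand_of_free_def
proof (elim exE conjE)
  fix s p
  assume "s \<in> I \<rightarrow> free_carrier R J" "p \<in> free_carrier R J \<rightarrow> I"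
    "\<forall>a\<in>I. \<forall>b\<in>I. s (a \<oplus>\<^bsub>R\<^esub> b) = free_add R J (s a) (s b)"
    "\<forall>r\<in>carrier R. \<forall>a\<in>I. s (r \<otimes>\<^bsub>R\<^esub> a) = free_smult R J r (s a)"
    "\<forall>f\<in>free_carrier R J. \<forall>g\<in>free_carrier R J. p (free_add R J f g) = p f \<oplus>\<^bsub>R\<^esub> p g"
    "\<forall>r\<in>carrier R. \<forall>f\<in>free_carrier R J. p (free_smult R J r f) = r \<otimes>\<^bsub>R\<^esub> p f"
    "\<forall>a\<in>I. p (s a) = a"
  with assms(1,2) have "ideal_free_summand R I J s p"
    by (simp add: ideal_free_summand_def ideal_free_summand_axioms_def)
  then show thesis by (rule that)
qed


context ideal_free_summand
begin

definition gen :: "'b \<Rightarrow> 'a" where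
  "gen j = p (free_basis R J j)"

lemma ideal_carrier: "I \<subseteq> carrier R"
  using ideal.Icarr[OF ideal] by blast

lemma gen_in_ideal: "gen j \<in> I"
  unfolding gen_def by (rule funcset_mem[OF p_into free_basis_in_free_carrier])

lemma s_apply_carrier: "a \<in> I \<Longrightarrow> j \<in> J \<Longrightarrow> s a j \<in> carrier R"
  by (rule free_carrier_apply[OF funcset_mem[OF s_into]])

lemma p_expansion:
  assumes "finite K" "f \<in> free_carrier R J" "K \<subseteq> J" "\<forall>j\<in>J - K. f j = \<zero>"
  shows "p f = (\<Oplus>j\<in>K. f j \<otimes> gen j)"
  using assms
proof (induction K arbitrary: f rule: finite_induct)
  case empty
  have f_ext: "f k = undefined" if "k \<notin> J" for k
    using empty.prems(1) that unfolding free_carrier_def by (blast intro: PiE_arb)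
  have "free_smult R J \<zero> f = f"
  proof (rule ext)
    fix k show "free_smult R J \<zero> f k = f k"
      using empty.prems(3) f_ext unfolding free_smult_def by (cases "k \<in> J") auto
  qed
  then have "p f = p (free_smult R J \<zero> f)" by simp
  also have "\<dots> = \<zero> \<otimes> p f" by (rule p_smult[OF zero_closed empty.prems(1)])
  also have "\<dots> = \<zero>" using funcset_mem[OF p_into empty.prems(1)] ideal_carrier by auto
  finally show ?case by simp
next
  case (insert j K)
  note fC = free_carrier_apply[OF insert.prems(1)]
  have j: "j \<in> J" using insert.prems(2) by blast
  have f_ext: "f k = undefined" if "k \<notin> J" for k
    using insert.prems(1) that unfolding free_carrier_def by (blast intro: PiE_arb)
  define g where "g = (\<lambda>k\<in>J. if k = j then \<zero> else f k)"
  have g: "g \<in> free_carrier R J"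
  proof -
    have "{k \<in> J. g k \<noteq> \<zero>} \<subseteq> {k \<in> J. f k \<noteq> \<zero>}" unfolding g_def by auto
    moreover have "finite {k \<in> J. f k \<noteq> \<zero>}" using insert.prems(1) unfolding free_carrier_def by blast
    ultimately have "finite {k \<in> J. g k \<noteq> \<zero>}" by (rule finite_subset)
    moreover have "g \<in> J \<rightarrow>\<^sub>E carrier R" using fC unfolding g_def by auto
    ultimately show ?thesis unfolding free_carrier_def by blast
  qed
  have f_split: "f = free_add R J g (free_smult R J (f j) (free_basis R J j))"
  proof (rule ext)
    fix k show "f k = free_add R J g (free_smult R J (f j) (free_basis R J j)) k"
      using fC f_ext j unfolding free_add_def free_smult_def g_def free_basis_def
      by (cases "k \<in> J") auto
  qed
  have "p f = p g \<oplus> f j \<otimes> gen j"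
    unfolding gen_def
    by (subst f_split, subst p_add[OF g free_smult_closed[OF fC[OF j] free_basis_in_free_carrier]])
      (simp add: p_smult[OF fC[OF j] free_basis_in_free_carrier])
  also have "p g = (\<Oplus>k\<in>K. g k \<otimes> gen k)"
  proof (rule insert.IH[OF g])
    show "K \<subseteq> J" using insert.prems(2) by blast
    show "\<forall>k\<in>J - K. g k = \<zero>" using insert.prems(3) unfolding g_def by auto
  qed
  also have "\<dots> = (\<Oplus>k\<in>K. f k \<otimes> gen k)"
    using insert.hyps(2) insert.prems(2) fC gen_in_ideal ideal_carrier
    by (intro finsum_cong') (auto simp: g_def subset_iff)
  also have "(\<Oplus>k\<in>K. f k \<otimes> gen k) \<oplus> f j \<otimes> gen j = (\<Oplus>k\<in>insert j K. f k \<otimes> gen k)"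
  proof -
    have "(\<lambda>k. f k \<otimes> gen k) \<in> insert j K \<rightarrow> carrier R"
      using insert.prems(2) fC gen_in_ideal ideal_carrier by (intro Pi_I m_closed) auto
    then show ?thesis using insert.hyps by (simp add: finsum_insert a_comm)
  qed
  finally show ?case .
qed

lemma s_coord_comm:
  assumes a: "a \<in> I" and b: "b \<in> I" and j: "j \<in> J"
  shows "s a j \<otimes> b = s b j \<otimes> a"
proof -
  have aC: "a \<in> carrier R" and bC: "b \<in> carrier R" using a b ideal_carrier by blast+
  have "b \<otimes> s a j = free_smult R J b (s a) j" using j unfolding free_smult_def by simp
  also have "\<dots> = s (b \<otimes> a) j" by (simp only: s_smult[OF bC a])
  also have "b \<otimes> a = a \<otimes> b" using bC aC by (rule m_comm)
  also have "s (a \<otimes> b) j = free_smult R J a (s b) j" by (simp only: s_smult[OF aC b])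
  also have "\<dots> = a \<otimes> s b j" using j unfolding free_smult_def by simp
  finally show ?thesis using aC bC s_apply_carrier[OF a j] s_apply_carrier[OF b j] by (simp add: m_comm)
qed

text \<open>The dual-basis trace \<open>\<Sum>\<^sub>j\<^sub>\<in>\<^sub>K s(gen j)\<^sub>j\<close>: by \<open>s_coord_comm\<close> it multiplies \<open>b\<close> into
  \<open>\<Sum>\<^sub>j\<^sub>\<in>\<^sub>K s(b)\<^sub>j gen j\<close>, which is \<open>p (s b) = b\<close> once \<open>K\<close> contains the support of \<open>s b\<close>.\<close>
definition trace :: "'b set \<Rightarrow> 'a" where
  "trace K = (\<Oplus>j\<in>K. s (gen j) j)"

lemma trace_mult:
  assumes K: "finite K" "K \<subseteq> J" and b: "b \<in> I"
  shows "trace K \<otimes> b = (\<Oplus>j\<in>K. s b j \<otimes> gen j)"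
proof -
  have "trace K \<otimes> b = (\<Oplus>j\<in>K. s (gen j) j \<otimes> b)"
    unfolding trace_def using K b gen_in_ideal s_apply_carrier ideal_carrier
    by (intro finsum_ldistr) auto
  also have "\<dots> = (\<Oplus>j\<in>K. s b j \<otimes> gen j)"
  proof (rule finsum_cong'[OF refl])
    show "(\<lambda>j. s b j \<otimes> gen j) \<in> K \<rightarrow> carrier R"
      using K b gen_in_ideal s_apply_carrier ideal_carrier by (intro Pi_I m_closed) auto
    show "s (gen j) j \<otimes> b = s b j \<otimes> gen j" if "j \<in> K" for j
      using s_coord_comm[OF gen_in_ideal b] that K(2) by blast
  qed
  finally show ?thesis .
qed

lemma trace_in_fg_colon:
  assumes K: "finite K" "K \<subseteq> J"
  shows "trace K \<in> fg_colon R I"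
proof -
  have genK: "gen ` K \<subseteq> carrier R" using gen_in_ideal ideal_carrier by blast
  note Idl_K = genideal_ideal[OF genK]
  have "trace K \<otimes> b \<in> Idl (gen ` K)" if b: "b \<in> I" for b
    unfolding trace_mult[OF K b]
  proof (rule finsum_in_ideal[OF Idl_K K(1)])
    fix j assume j: "j \<in> K"
    then have "gen j \<in> Idl (gen ` K)" using genideal_self[OF genK] by blast
    moreover have "s b j \<in> carrier R" using s_apply_carrier[OF b] j K(2) by blast
    ultimately show "s b j \<otimes> gen j \<in> Idl (gen ` K)" by (rule ideal.I_l_closed[OF Idl_K])
  qed
  moreover have "trace K \<in> carrier R"
    unfolding trace_def using K gen_in_ideal s_apply_carrier by (intro finsum_closed) auto
  moreover have "finite (gen ` K)" "gen ` K \<subseteq> I" using K(1) gen_in_ideal by auto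
  ultimately show ?thesis unfolding fg_colon_def by blast
qed

lemma fixed_by_fg_colon:
  assumes a: "a \<in> I"
  shows "\<exists>t\<in>fg_colon R I. t \<otimes> a = a"
proof -
  let ?K = "{j \<in> J. s a j \<noteq> \<zero>}"
  have sa: "s a \<in> free_carrier R J" using s_into a by blast
  then have K: "finite ?K" "?K \<subseteq> J" unfolding free_carrier_def by auto
  have "trace ?K \<otimes> a = (\<Oplus>j\<in>?K. s a j \<otimes> gen j)" by (rule trace_mult[OF K a])
  also have "\<dots> = p (s a)" by (rule p_expansion[OF K(1) sa K(2), symmetric]) auto
  also have "\<dots> = a" by (rule p_s[OF a])
  finally show ?thesis using trace_in_fg_colon[OF K] by blast
qed

end

theorem corollary3p8:
  fixes R (structure) and I :: "'a set"
  assumes "cring R"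
    and "ideal I R"
    and "\<forall>P. minimal_prime R P \<longrightarrow> \<not> I \<subseteq> P"
    and "projective_ideal TYPE('b) R I"
  shows "fg_ideal R I"
proof (rule ccontr)
  assume not_fg: "\<not> fg_ideal R I"
  interpret cring R by fact
  obtain J :: "'b set" where "summand_of_free R I J"
    using assms(4) unfolding projective_ideal_def by blast
  then obtain s p where "ideal_free_summand R I J s p"
    using ideal_free_summandI[OF assms(1,2)] by blast
  then interpret ideal_free_summand R I J s p .
  have "\<one> \<notin> fg_colon R I"
    using not_fg fg_ideal_if_one_in_fg_colon[OF assms(2)] by blast
  then obtain P where "minimal_prime R P" "I \<subseteq> P"
    using minimal_prime_if_fixed_by_proper_ideal[OF fg_colon_ideal[OF assms(2)] _ ideal_carrier]
      fixed_by_fg_colon by blast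
  with assms(3) show False by blast
qed

end
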